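(* Let $S\in U_q(\mathfrak h)^{\otimes2}$ be invertible, with $s:=\log_qS=\sum_{\mu,\nu}s_{\mu\nu}\zeta^{\alpha_\mu}\otimes\zeta^{\alpha_\nu}\in\mathfrak h\otimes\mathfrak h$. Put $m(s)=\sum s_{\mu\nu}\zeta^{\alpha_\mu}\zeta^{\alpha_\nu}$, and for each index $\mu$ let $$Y_\mu=-\zeta^{\alpha_\mu}+(\mathrm{id}\otimes\ell_\mu)(s)-(\ell_\mu\otimes\mathrm{id})(s)\in\mathfrak h,$$ where $\ell_\mu$ is the linear form $h\mapsto(\zeta^{\alpha_\mu},h)$. Define $$M^{(0)}(x)=q^{-\frac14m(\Omega_{\mathfrak h})-\frac12m(s)}\prod_\mu x_\mu^{\frac12Y_\mu}\in\mathbb A(\mathfrak h)\otimes U_q(\mathfrak h),$$ so that $M^{(0)}(x)^2=k^{-1}\,m(S^{-1})\prod_\mu x_\mu^{Y_\mu}$, where $k=q^{\frac12m(\Omega_{\mathfrak h})}$ and $m(S^{-1})=q^{-m(s)}$. Then $M^{(0)}(x)$ is invertible and satisfies $$\Delta(M^{(0)}(x))=S_{12}^{-1}\,M^{(0)}_1(xq^{h_2})\,M^{(0)}_2(x),\qquad M^{(0)}_1(xq^{h_2})^2=M^{(0)}_1(x)^2\,S_{12}\,S_{21}^{-1}\,K^{-1}.$$ If moreover $K\,S_{12}\,S_{21}=1\otimes1$, then $M^{(0)}(x)^2=\prod_\mu x_\mu^{Y_\mu}$.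
   Context: Setting. - $\mathfrak g$ is a simply-laced finite or non-twisted affine Kac–Moody algebra with Cartan subalgebra $\mathfrak h$, simple coroots $h_{\alpha_\mu}$, and invariant form $(\cdot,\cdot)$. - The index $\mu$ runs over the simple roots, and additionally over the symbol $d$ in the affine case, with $h_{\alpha_d}:=d$ and $\zeta^{\alpha_d}:=\zeta^d=c$. Thus $\{\zeta^{\alpha_\mu}\}$ is the basis of $\mathfrak h$ dual to $\{h_{\alpha_\mu}\}$ for $(\cdot,\cdot)$. - $\Omega_{\mathfrak h}=\sum_\mu\zeta^{\alpha_\mu}\otimes h_{\alpha_\mu}$, $K=q^{\Omega_{\mathfrak h}}$, and $m$ denotes multiplication $\mathfrak h\otimes\mathfrak h\to S(\mathfrak h)$. - $U_q(\mathfrak h)$ is the commutative algebra generated by the $q^{hh'}$ ($h,h'\in\mathfrak h\oplus\mathbb C$), with $\Delta(q^h)=q^h\otimes q^h$. Hence $\Delta(q^{hh'})=q^{hh'}\otimes q^{hh'}\,q^{h\otimes h'+h'\otimes h}$, with the tensor square extended by the elements $q^{h\otimes h'}$. - $\mathbb A(\mathfrak h)$ is the commutative Hopf algebra generated by symbols $x_\mu^h$ ($h\in\mathfrak h+\mathbb C1$) with $x_\mu^{h+h'}=x_\mu^hx_\mu^{h'}$ and $\Delta(x_\mu^h)=x_\mu^h\otimes x_\mu^h$; $\Delta$ acts on $\mathbb A(\mathfrak h)\otimes U_q(\mathfrak h)$ through the $U_q(\mathfrak h)$ factor. - The shifted argument $xq^{h_2}$ means: each factor $x_\mu^{Y}$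 with $Y$ in tensor factor 1 is replaced by $x_\mu^Y\,q^{Y\otimes h_{\alpha_\mu}}$, where $h_{\alpha_\mu}$ sits in tensor factor 2. *)

theory Defs
  imports Complex_Main
begin

text \<open>The index set of the mu (simple roots, plus d in the affine
case) is a finite type 'i.  Elements of the Cartan subalgebra h are coordinate
vectors w.r.t. the basis h_alpha_mu, i.e. functions 'i => complex.  The invariant
form is given by its (symmetric) Gram matrix G, G a b = (h_a, h_b).
The dual basis zeta^alpha_mu is given by zeta mu :: 'i => complex.

U_q(h) (and A(h) tensor U_q(h), and their tensor squares) are realised as
functions of weights lambda in h^* (lambda represented by its values
lambda mu = lambda(h_alpha_mu)), and of t, where x_mu = q^(t mu); q = exp hb.\<close>

type_synonym 'i cartan = "'i \<Rightarrow> complex"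

definition hvec :: "'i \<Rightarrow> 'i cartan" where
  "hvec \<mu> = (\<lambda>a. if a = \<mu> then 1 else 0)"

definition pair :: "'i::finite cartan \<Rightarrow> 'i cartan \<Rightarrow> complex" where
  "pair lam v = (\<Sum>a\<in>UNIV. v a * lam a)"

definition form :: "('i::finite \<Rightarrow> 'i \<Rightarrow> complex) \<Rightarrow> 'i cartan \<Rightarrow> 'i cartan \<Rightarrow> complex" where
  "form G u v = (\<Sum>a\<in>UNIV. \<Sum>b\<in>UNIV. u a * G a b * v b)"

definition is_dual_basis :: "('i::finite \<Rightarrow> 'i \<Rightarrow> complex) \<Rightarrow> ('i \<Rightarrow> 'i cartan) \<Rightarrow> bool" where
  "is_dual_basis G zeta \<longleftrightarrow> (\<forall>a b. G a b = G b a) \<and>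
     (\<forall>\<mu> \<nu>. form G (zeta \<mu>) (hvec \<nu>) = (if \<mu> = \<nu> then 1 else 0))"

definition qpow :: "complex \<Rightarrow> complex \<Rightarrow> complex" where
  "qpow hb z = exp (hb * z)"

text \<open>x_mu^Y for Y in h, as an element of A(h) tensor U_q(h)\<close>
definition xpow :: "complex \<Rightarrow> 'i::finite \<Rightarrow> 'i cartan \<Rightarrow> ('i \<Rightarrow> complex) \<Rightarrow> 'i cartan \<Rightarrow> complex" where
  "xpow hb \<mu> Y t lam = qpow hb (t \<mu> * pair lam Y)"

definition mOmega :: "('i::finite \<Rightarrow> 'i cartan) \<Rightarrow> 'i cartan \<Rightarrow> complex" where
  "mOmega zeta lam = (\<Sum>\<mu>\<in>UNIV. pair lam (zeta \<mu>) * pair lam (hvec \<mu>))"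

definition ms :: "('i::finite \<Rightarrow> 'i cartan) \<Rightarrow> ('i \<Rightarrow> 'i \<Rightarrow> complex) \<Rightarrow> 'i cartan \<Rightarrow> complex" where
  "ms zeta s lam = (\<Sum>a\<in>UNIV. \<Sum>b\<in>UNIV. s a b * pair lam (zeta a) * pair lam (zeta b))"

text \<open>S = q^s in U_q(h)^{tensor 2}, s = sum s_{ab} zeta^a tensor zeta^b; S21, K = q^Omega\<close>
definition Sfun :: "complex \<Rightarrow> ('i::finite \<Rightarrow> 'i cartan) \<Rightarrow> ('i \<Rightarrow> 'i \<Rightarrow> complex) \<Rightarrow> 'i cartan \<Rightarrow> 'i cartan \<Rightarrow> complex" where
  "Sfun hb zeta s lam1 lam2 =
     qpow hb (\<Sum>a\<in>UNIV. \<Sum>b\<in>UNIV. s a b * pair lam1 (zeta a) * pair lam2 (zeta b))"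

definition S21fun where
  "S21fun hb zeta s lam1 lam2 = Sfun hb zeta s lam2 lam1"

definition Kfun :: "complex \<Rightarrow> ('i::finite \<Rightarrow> 'i cartan) \<Rightarrow> 'i cartan \<Rightarrow> 'i cartan \<Rightarrow> complex" where
  "Kfun hb zeta lam1 lam2 = qpow hb (\<Sum>\<mu>\<in>UNIV. pair lam1 (zeta \<mu>) * pair lam2 (hvec \<mu>))"

definition Yvec :: "('i::finite \<Rightarrow> 'i \<Rightarrow> complex) \<Rightarrow> ('i \<Rightarrow> 'i cartan) \<Rightarrow> ('i \<Rightarrow> 'i \<Rightarrow> complex) \<Rightarrow> 'i \<Rightarrow> 'i cartan" where
  "Yvec G zeta s \<mu> = (\<lambda>c. - zeta \<mu> c
      + (\<Sum>a\<in>UNIV. \<Sum>b\<in>UNIV. s a b * zeta a c * form G (zeta \<mu>) (zeta b))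
      - (\<Sum>a\<in>UNIV. \<Sum>b\<in>UNIV. s a b * form G (zeta \<mu>) (zeta a) * zeta b c))"

definition M0 :: "complex \<Rightarrow> ('i::finite \<Rightarrow> 'i \<Rightarrow> complex) \<Rightarrow> ('i \<Rightarrow> 'i cartan) \<Rightarrow> ('i \<Rightarrow> 'i \<Rightarrow> complex)
                  \<Rightarrow> ('i \<Rightarrow> complex) \<Rightarrow> 'i cartan \<Rightarrow> complex" where
  "M0 hb G zeta s t lam =
     qpow hb (- (1/4) * mOmega zeta lam - (1/2) * ms zeta s lam) *
     (\<Prod>\<mu>\<in>UNIV. xpow hb \<mu> (\<lambda>c. (1/2) * Yvec G zeta s \<mu> c) t lam)"

definition kfun where "kfun hb zeta lam = qpow hb ((1/2) * mOmega zeta lam)"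
definition mSinv where "mSinv hb zeta s lam = qpow hb (- ms zeta s lam)"

text \<open>addition of weights (used for the coproduct: Delta F (lam1,lam2) = F (lam1+lam2))\<close>
definition addw :: "'i cartan \<Rightarrow> 'i cartan \<Rightarrow> 'i cartan" where
  "addw lam1 lam2 = (\<lambda>a. lam1 a + lam2 a)"

text \<open>the shifted argument x q^(h_2): t_mu \<mapsto> t_mu + lam2(h_alpha_mu)\<close>
definition shift :: "('i \<Rightarrow> complex) \<Rightarrow> 'i cartan \<Rightarrow> ('i \<Rightarrow> complex)" where
  "shift t lam2 = (\<lambda>\<mu>. t \<mu> + lam2 \<mu>)"

end

theory Submission
  imports Defs
begin

text \<open>Everything in sight is a \<open>q\<close>-exponential of a polynomial of degree at most two in the
weights \<open>\<lambda>\<close> and in \<open>t\<close>, where \<open>x\<^sub>\<mu> = q\<^sup>t\<^sup>\<^sub>\<mu>\<close>: \<open>S\<close> and \<open>K\<close> are the bilinear forms \<open>s\<close> and \<open>\<Omega>\<close>,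
\<open>m(s)\<close> and \<open>m(\<Omega>)\<close> their diagonals, the coproduct is evaluation at \<open>\<lambda>\<^sub>1 + \<lambda>\<^sub>2\<close>, and \<open>x q\<^sup>h\<^sup>\<^sub>2\<close>
is the shift \<open>t \<mapsto> t + \<lambda>\<^sub>2\<close>. Each claim is therefore an identity of exponents, proved by
expanding the quadratic forms bilinearly. The one non-formal input is that, for a dual basis,
\<open>\<Sum>\<^sub>\<mu> \<lambda>\<^sub>2(h\<^sub>\<mu>) \<lambda>\<^sub>1(Y\<^sub>\<mu>) = s(\<lambda>\<^sub>1,\<lambda>\<^sub>2) - s(\<lambda>\<^sub>2,\<lambda>\<^sub>1) - \<Omega>(\<lambda>\<^sub>1,\<lambda>\<^sub>2)\<close>: this is what absorbs the cross
terms of \<open>m(s)\<close> and \<open>m(\<Omega>)\<close> in the coproduct of \<open>M\<^sup>(\<^sup>0\<^sup>)\<close>.\<close>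

lemma qpow_add: "qpow hb (a + b) = qpow hb a * qpow hb b"
  by (simp add: qpow_def distrib_left exp_add)

lemma qpow_minus: "qpow hb (- a) = inverse (qpow hb a)"
  by (simp add: qpow_def exp_minus)

lemma qpow_power2: "(qpow hb a)\<^sup>2 = qpow hb (2 * a)"
  by (simp add: qpow_def power2_eq_square exp_add[symmetric] algebra_simps)

lemma qpow_sum: "finite A \<Longrightarrow> (\<Prod>i\<in>A. qpow hb (f i)) = qpow hb (\<Sum>i\<in>A. f i)"
  by (simp add: qpow_def sum_distrib_left exp_sum)

lemma pair_addw: "pair (addw l1 l2) v = pair l1 v + pair l2 v"
  by (simp add: pair_def addw_def distrib_left sum.distrib)

lemma pair_hvec: "pair l (hvec \<mu>) = l \<mu>"
  unfolding pair_def hvec_def by (simp add: if_distrib[of "\<lambda>x. x * _"] cong: if_cong)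

lemma pair_sum_right: "pair l (\<lambda>c. \<Sum>a\<in>A. f a c) = (\<Sum>a\<in>A. pair l (f a))"
  unfolding pair_def by (simp add: sum_distrib_right sum.swap[of _ UNIV A])

lemma pair_scale_right: "pair l (\<lambda>c. k * v c) = k * pair l v"
  by (simp add: pair_def sum_distrib_left mult.assoc)

lemma pair_add_right: "pair l (\<lambda>c. u c + v c) = pair l u + pair l v"
  by (simp add: pair_def distrib_right sum.distrib)

lemma pair_diff_right: "pair l (\<lambda>c. u c - v c) = pair l u - pair l v"
  by (simp add: pair_def left_diff_distrib sum_subtractf)

lemma pair_minus_right: "pair l (\<lambda>c. - v c) = - pair l v"
  by (simp add: pair_def sum_negf)

text \<open>The exponents: \<open>slog zeta s \<lambda>\<^sub>1 \<lambda>\<^sub>2 = (\<lambda>\<^sub>1 \<otimes> \<lambda>\<^sub>2)(s)\<close>, \<open>omega zeta \<lambda>\<^sub>1 \<lambda>\<^sub>2 = (\<lambda>\<^sub>1 \<otimes> \<lambda>\<^sub>2)(\<Omega>)\<close>,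
and \<open>ypair G zeta s t \<lambda> = \<Sum>\<^sub>\<mu> t\<^sub>\<mu> \<lambda>(Y\<^sub>\<mu>)\<close>, the exponent of \<open>\<Prod>\<^sub>\<mu> x\<^sub>\<mu>\<^sup>Y\<^sup>\<^sub>\<mu>\<close>.\<close>

definition slog :: "('i::finite \<Rightarrow> 'i cartan) \<Rightarrow> ('i \<Rightarrow> 'i \<Rightarrow> complex) \<Rightarrow> 'i cartan \<Rightarrow> 'i cartan \<Rightarrow> complex" where
  "slog zeta s lam1 lam2 = (\<Sum>a\<in>UNIV. \<Sum>b\<in>UNIV. s a b * pair lam1 (zeta a) * pair lam2 (zeta b))"

definition omega :: "('i::finite \<Rightarrow> 'i cartan) \<Rightarrow> 'i cartan \<Rightarrow> 'i cartan \<Rightarrow> complex" where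
  "omega zeta lam1 lam2 = (\<Sum>\<mu>\<in>UNIV. pair lam1 (zeta \<mu>) * lam2 \<mu>)"

definition ypair :: "('i::finite \<Rightarrow> 'i \<Rightarrow> complex) \<Rightarrow> ('i \<Rightarrow> 'i cartan) \<Rightarrow> ('i \<Rightarrow> 'i \<Rightarrow> complex)
                      \<Rightarrow> ('i \<Rightarrow> complex) \<Rightarrow> 'i cartan \<Rightarrow> complex" where
  "ypair G zeta s t lam = (\<Sum>\<mu>\<in>UNIV. t \<mu> * pair lam (Yvec G zeta s \<mu>))"

lemma Sfun_eq_qpow_slog: "Sfun hb zeta s lam1 lam2 = qpow hb (slog zeta s lam1 lam2)"
  by (simp add: Sfun_def slog_def)

lemma Kfun_eq_qpow_omega: "Kfun hb zeta lam1 lam2 = qpow hb (omega zeta lam1 lam2)"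
  by (simp add: Kfun_def omega_def pair_hvec)

lemma mOmega_eq_omega: "mOmega zeta lam = omega zeta lam lam"
  by (simp add: mOmega_def omega_def pair_hvec)

lemma ms_eq_slog: "ms zeta s lam = slog zeta s lam lam"
  by (simp add: ms_def slog_def)

lemma prod_xpow_Yvec: "(\<Prod>\<mu>\<in>UNIV. xpow hb \<mu> (Yvec G zeta s \<mu>) t lam) = qpow hb (ypair G zeta s t lam)"
  by (simp add: xpow_def ypair_def qpow_sum)

lemma M0_eq_qpow:
  "M0 hb G zeta s t lam =
     qpow hb (ypair G zeta s t lam / 2 - omega zeta lam lam / 4 - slog zeta s lam lam / 2)"
  unfolding M0_def xpow_def pair_scale_right
  by (simp add: qpow_sum ypair_def mOmega_eq_omega ms_eq_slog flip: qpow_add)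
     (simp add: algebra_simps sum_divide_distrib)

lemma slog_addw_left: "slog zeta s (addw l1 l2) l = slog zeta s l1 l + slog zeta s l2 l"
  by (simp add: slog_def pair_addw algebra_simps sum.distrib)

lemma slog_addw_right: "slog zeta s l (addw l1 l2) = slog zeta s l l1 + slog zeta s l l2"
  by (simp add: slog_def pair_addw algebra_simps sum.distrib)

lemma omega_addw_left: "omega zeta (addw l1 l2) l = omega zeta l1 l + omega zeta l2 l"
  by (simp add: omega_def pair_addw algebra_simps sum.distrib)

lemma omega_addw_right: "omega zeta l (addw l1 l2) = omega zeta l l1 + omega zeta l l2"
  by (simp add: omega_def addw_def algebra_simps sum.distrib)

lemma ypair_addw: "ypair G zeta s t (addw l1 l2) = ypair G zeta s t l1 + ypair G zeta s t l2"
  by (simp add: ypair_def pair_addw algebra_simps sum.distrib)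

lemma ypair_shift: "ypair G zeta s (shift t l2) l1 = ypair G zeta s t l1 + ypair G zeta s l2 l1"
  by (simp add: ypair_def shift_def algebra_simps sum.distrib)

lemma M0_nonzero: "M0 hb G zeta s t lam \<noteq> 0"
  by (simp add: M0_eq_qpow qpow_def)

lemma M0_square:
  "(M0 hb G zeta s t lam)\<^sup>2 =
     inverse (kfun hb zeta lam) * mSinv hb zeta s lam * (\<Prod>\<mu>\<in>UNIV. xpow hb \<mu> (Yvec G zeta s \<mu>) t lam)"
proof -
  have "(M0 hb G zeta s t lam)\<^sup>2 =
      qpow hb (- ((1/2) * omega zeta lam lam) + - slog zeta s lam lam + ypair G zeta s t lam)"
    unfolding M0_eq_qpow qpow_power2 by (rule arg_cong[where f = "qpow hb"]) (simp add: algebra_simps)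
  also have "\<dots> =
      inverse (kfun hb zeta lam) * mSinv hb zeta s lam * (\<Prod>\<mu>\<in>UNIV. xpow hb \<mu> (Yvec G zeta s \<mu>) t lam)"
    by (simp only: qpow_add qpow_minus kfun_def mSinv_def mOmega_eq_omega ms_eq_slog prod_xpow_Yvec)
  finally show ?thesis .
qed

lemma M0_square_eq_prod_xpow:
  assumes "\<forall>lam1 lam2. Kfun hb zeta lam1 lam2 * Sfun hb zeta s lam1 lam2 * S21fun hb zeta s lam1 lam2 = 1"
  shows "(M0 hb G zeta s t lam)\<^sup>2 = (\<Prod>\<mu>\<in>UNIV. xpow hb \<mu> (Yvec G zeta s \<mu>) t lam)"
proof -
  \<comment> \<open>The hypothesis must be used at \<open>(\<lambda>/2, \<lambda>/2)\<close>; at \<open>(\<lambda>, \<lambda>)\<close> it only gives \<open>(q\<^sup>c)\<^sup>2 = 1\<close>.\<close>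
  define h where "h = (\<lambda>a. lam a / 2)"
  define c where "c = omega zeta h h + slog zeta s h h + slog zeta s h h"
  have lam: "lam = addw h h"
    by (simp add: addw_def h_def)
  have c: "qpow hb c = 1"
    using assms[rule_format, of h h] unfolding c_def
    by (simp only: Kfun_eq_qpow_omega Sfun_eq_qpow_slog S21fun_def qpow_add)
  have "(M0 hb G zeta s t lam)\<^sup>2 = qpow hb (ypair G zeta s t lam + - (2 * c))"
    unfolding M0_eq_qpow qpow_power2 c_def
    by (rule arg_cong[where f = "qpow hb"])
       (simp add: lam slog_addw_left slog_addw_right omega_addw_left omega_addw_right field_simps)
  also have "\<dots> = qpow hb (ypair G zeta s t lam) * inverse ((qpow hb c)\<^sup>2)"
    by (simp only: qpow_add qpow_minus qpow_power2)
  finally show ?thesis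
    by (simp add: c prod_xpow_Yvec)
qed

context
  fixes G :: "'i::finite \<Rightarrow> 'i \<Rightarrow> complex" and zeta :: "'i \<Rightarrow> 'i cartan"
  assumes dual: "is_dual_basis G zeta"
begin

lemma form_dual_basis: "form G (zeta \<mu>) v = v \<mu>"
proof -
  have "form G u (hvec b) = (\<Sum>a\<in>UNIV. u a * G a b)" for u b
    unfolding form_def hvec_def by (simp add: if_distrib[of "\<lambda>x. _ * x"] cong: if_cong)
  then have "form G u v = (\<Sum>b\<in>UNIV. form G u (hvec b) * v b)" for u
    unfolding form_def by (simp add: sum_distrib_right) (rule sum.swap)
  moreover have "form G (zeta \<mu>) (hvec b) = (if b = \<mu> then 1 else 0)" for b
    using dual unfolding is_dual_basis_def by auto
  ultimately show ?thesis
    by (simp add: if_distrib[of "\<lambda>x. x * _"] cong: if_cong)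
qed

lemma zeta_symmetric: "zeta \<mu> a = zeta a \<mu>"
proof -
  have "form G u v = form G v u" for u v
    using dual unfolding is_dual_basis_def form_def
    by (subst sum.swap) (simp add: mult.commute mult.left_commute)
  then show ?thesis
    using form_dual_basis[of a "zeta \<mu>"] form_dual_basis[of \<mu> "zeta a"] by simp
qed

lemma omega_commute: "omega zeta lam1 lam2 = omega zeta lam2 lam1"
proof -
  have "omega zeta lam1 lam2 = (\<Sum>\<mu>\<in>UNIV. \<Sum>a\<in>UNIV. lam1 a * lam2 \<mu> * zeta a \<mu>)"
    by (simp add: omega_def pair_def sum_distrib_left sum_distrib_right zeta_symmetric mult_ac)
  also have "\<dots> = (\<Sum>a\<in>UNIV. \<Sum>\<mu>\<in>UNIV. lam1 a * lam2 \<mu> * zeta a \<mu>)"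
    by (rule sum.swap)
  also have "\<dots> = omega zeta lam2 lam1"
    by (simp add: omega_def pair_def sum_distrib_left sum_distrib_right mult_ac)
  finally show ?thesis .
qed

lemma Yvec_dual_basis:
  "Yvec G zeta s \<mu> = (\<lambda>c. - zeta \<mu> c
      + (\<Sum>a\<in>UNIV. \<Sum>b\<in>UNIV. s a b * zeta b \<mu> * zeta a c)
      - (\<Sum>a\<in>UNIV. \<Sum>b\<in>UNIV. s a b * zeta a \<mu> * zeta b c))"
  by (simp add: Yvec_def form_dual_basis mult_ac)

lemma ypair_eq_slog_omega:
  "ypair G zeta s lam2 lam1 = slog zeta s lam1 lam2 - slog zeta s lam2 lam1 - omega zeta lam1 lam2"
proof -
  have "pair lam1 (Yvec G zeta s \<mu>) = - pair lam1 (zeta \<mu>)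
      + (\<Sum>a\<in>UNIV. \<Sum>b\<in>UNIV. s a b * zeta b \<mu> * pair lam1 (zeta a))
      - (\<Sum>a\<in>UNIV. \<Sum>b\<in>UNIV. s a b * zeta a \<mu> * pair lam1 (zeta b))" for \<mu>
    by (simp add: Yvec_dual_basis pair_add_right pair_diff_right pair_minus_right pair_sum_right
        pair_scale_right)
  then have "ypair G zeta s lam2 lam1 = pair lam2 (\<lambda>\<mu>. - pair lam1 (zeta \<mu>)
      + (\<Sum>a\<in>UNIV. \<Sum>b\<in>UNIV. s a b * pair lam1 (zeta a) * zeta b \<mu>)
      - (\<Sum>a\<in>UNIV. \<Sum>b\<in>UNIV. s a b * pair lam1 (zeta b) * zeta a \<mu>))"
    by (simp add: ypair_def pair_def mult_ac)
  also have "\<dots> = slog zeta s lam1 lam2 - slog zeta s lam2 lam1 - omega zeta lam1 lam2"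
    unfolding pair_add_right pair_diff_right pair_minus_right pair_sum_right pair_scale_right
    by (simp add: slog_def omega_def pair_def[of lam2 "\<lambda>\<mu>. pair lam1 (zeta \<mu>)"] mult_ac)
  finally show ?thesis .
qed

lemma M0_coproduct:
  "M0 hb G zeta s t (addw lam1 lam2) =
     inverse (Sfun hb zeta s lam1 lam2) * M0 hb G zeta s (shift t lam2) lam1 * M0 hb G zeta s t lam2"
proof -
  have "M0 hb G zeta s t (addw lam1 lam2) = qpow hb (- slog zeta s lam1 lam2
      + (ypair G zeta s (shift t lam2) lam1 / 2 - omega zeta lam1 lam1 / 4 - slog zeta s lam1 lam1 / 2)
      + (ypair G zeta s t lam2 / 2 - omega zeta lam2 lam2 / 4 - slog zeta s lam2 lam2 / 2))"
    unfolding M0_eq_qpow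
    by (rule arg_cong[where f = "qpow hb"])
       (simp add: slog_addw_left slog_addw_right omega_addw_left omega_addw_right ypair_addw ypair_shift
         ypair_eq_slog_omega[of s lam2 lam1] omega_commute[of lam2 lam1] field_simps)
  then show ?thesis
    by (simp only: qpow_add qpow_minus Sfun_eq_qpow_slog M0_eq_qpow)
qed

lemma M0_shift_square:
  "(M0 hb G zeta s (shift t lam2) lam1)\<^sup>2 =
     (M0 hb G zeta s t lam1)\<^sup>2 * Sfun hb zeta s lam1 lam2 * inverse (S21fun hb zeta s lam1 lam2)
       * inverse (Kfun hb zeta lam1 lam2)"
proof -
  have "(M0 hb G zeta s (shift t lam2) lam1)\<^sup>2 = qpow hb
      (2 * (ypair G zeta s t lam1 / 2 - omega zeta lam1 lam1 / 4 - slog zeta s lam1 lam1 / 2)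
       + slog zeta s lam1 lam2 + - slog zeta s lam2 lam1 + - omega zeta lam1 lam2)"
    unfolding M0_eq_qpow qpow_power2
    by (rule arg_cong[where f = "qpow hb"])
       (simp add: ypair_shift ypair_eq_slog_omega[of s lam2 lam1] field_simps)
  then show ?thesis
    by (simp only: qpow_add qpow_minus qpow_power2 Sfun_eq_qpow_slog S21fun_def Kfun_eq_qpow_omega
        M0_eq_qpow)
qed

end

theorem mainTheorem3:
  fixes hb :: complex and G :: "'i::finite \<Rightarrow> 'i \<Rightarrow> complex"
    and zeta :: "'i \<Rightarrow> 'i cartan" and s :: "'i \<Rightarrow> 'i \<Rightarrow> complex"
  assumes "is_dual_basis G zeta"
  shows "(\<exists>N. \<forall>t lam. M0 hb G zeta s t lam * N t lam = 1)
    \<and> (\<forall>t lam. (M0 hb G zeta s t lam)\<^sup>2 =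
          inverse (kfun hb zeta lam) * mSinv hb zeta s lam *
          (\<Prod>\<mu>\<in>UNIV. xpow hb \<mu> (Yvec G zeta s \<mu>) t lam))
    \<and> (\<forall>t lam1 lam2. M0 hb G zeta s t (addw lam1 lam2) =
          inverse (Sfun hb zeta s lam1 lam2) * M0 hb G zeta s (shift t lam2) lam1 * M0 hb G zeta s t lam2)
    \<and> (\<forall>t lam1 lam2. (M0 hb G zeta s (shift t lam2) lam1)\<^sup>2 =
          (M0 hb G zeta s t lam1)\<^sup>2 * Sfun hb zeta s lam1 lam2 * inverse (S21fun hb zeta s lam1 lam2)
            * inverse (Kfun hb zeta lam1 lam2))
    \<and> ((\<forall>lam1 lam2. Kfun hb zeta lam1 lam2 * Sfun hb zeta s lam1 lam2 * S21fun hb zeta s lam1 lam2 = 1)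
        \<longrightarrow> (\<forall>t lam. (M0 hb G zeta s t lam)\<^sup>2 = (\<Prod>\<mu>\<in>UNIV. xpow hb \<mu> (Yvec G zeta s \<mu>) t lam)))"
proof (intro conjI allI impI)
  show "\<exists>N. \<forall>t lam. M0 hb G zeta s t lam * N t lam = 1"
    by (rule exI[of _ "\<lambda>t lam. inverse (M0 hb G zeta s t lam)"]) (simp add: M0_nonzero)
qed (rule M0_square M0_coproduct[OF assms] M0_shift_square[OF assms] M0_square_eq_prod_xpow | assumption)+

end
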